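(* Let $\mathcal M$ be an MDP and consider a relational reachability property $$\exists \sigma_1,\ldots,\sigma_n \in \Sigma^{\mathcal M}.~ \sum_{i=1}^{m} q_i \cdot \Pr^{\sigma_{k_i}}_{s_i}(\Diamond T_i) ~\mathsf{comp}~ q_{m+1} \qquad (\star)$$ as in the context. Let $\mathsf{Comb}=\{(s_i,k_i)\mid i=1,\ldots,m\}=\{c_1,\ldots,c_k\}$ (the distinct pairs of initial state and scheduler index occurring in $(\star)$), and for $c\in\mathsf{Comb}$ let $\mathit{ind}(c)=\{i\in\{1,\dots,m\}\mid (s_i,k_i)=c\}$. Then $(\star)$ holds in $\mathcal M$ if and only if $$\exists \sigma_{c_1},\ldots,\sigma_{c_k}\in \Sigma^{\mathcal M}.~ \sum_{i=1}^{k} \Big[\sum_{j\in \mathit{ind}(c_i)} q_j\cdot \Pr^{\sigma_{c_i}}_{s_j}(\Diamond T_j)\Big] ~\mathsf{comp}~ q_{m+1},$$ i.e., one may quantify over a separate (general) scheduler for each state–scheduler combination.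
   Context: An MDP is a triple $\mathcal M=(S,\mathrm{Act},P)$ where $S$ and $\mathrm{Act}$ are finite non-empty sets and $P:S\times\mathrm{Act}\times S\to[0,1]$ is such that for every $s\in S$ the set of enabled actions $\mathrm{Act}(s)=\{\alpha\mid \sum_{s'}P(s,\alpha,s')=1\}$ is non-empty and $\sum_{s'}P(s,\alpha,s')=0$ for $\alpha\notin\mathrm{Act}(s)$. A finite path is a sequence $s_0\alpha_0s_1\ldots\alpha_{n-1}s_n$ with $P(s_i,\alpha_i,s_{i+1})>0$. A (general, i.e. history-dependent randomized) scheduler is a function $\sigma$ mapping finite paths to probability distributions over $\mathrm{Act}$, supported on the enabled actions of the last state of the path; $\Sigma^{\mathcal M}$ is the set of all such schedulers. For a scheduler $\sigma$, state $s$ and $T\subseteq S$, $\Pr^{\sigma}_{s}(\Diamond T)$ is the probability of eventually reaching $T$ starting from $s$ in the Markov chain induced by $\sigma$. In $(\star)$: $m\ge n$ are naturals, $q_1,\ldots,q_{m+1}\in\mathbb Q$, $s_1,\ldots,s_m\in S$ (not necessarily distinct), $\{k_1,\ldots,k_m\}=\{1,\ldots,n\}$, $T_1,\ldots,T_m\subseteq S$ (not necessarily distinct), and $\mathsf{comp}\in\{>,\ge,\approx_\epsilon,\not\approx_\epsilon\mid \epsilon\in\mathbb Q_{\ge 0}\}$, where $r\approx_\epsilon r'$ iff $|r-r'|\le\epsilon$ and $r\not\approx_\epsilon r'$ iff $|r-r'|>\epsilon$. *)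

theory Defs
  imports "HOL-Probability.Probability"
begin

definition enabled :: "('s::finite \<Rightarrow> 'a::finite \<Rightarrow> 's \<Rightarrow> real) \<Rightarrow> 's \<Rightarrow> 'a set" where
  "enabled P s = {\<alpha>. (\<Sum>s'\<in>UNIV. P s \<alpha> s') = 1}"

definition is_mdp :: "('s::finite \<Rightarrow> 'a::finite \<Rightarrow> 's \<Rightarrow> real) \<Rightarrow> bool" where
  "is_mdp P \<longleftrightarrow> (\<forall>s \<alpha> s'. 0 \<le> P s \<alpha> s' \<and> P s \<alpha> s' \<le> 1)
     \<and> (\<forall>s. enabled P s \<noteq> {})
     \<and> (\<forall>s \<alpha>. \<alpha> \<notin> enabled P s \<longrightarrow> (\<Sum>s'\<in>UNIV. P s \<alpha> s') = 0)"

text \<open>A finite path s0 a0 s1 ... a(n-1) sn is represented as (s0, [(a0,s1),...,(a(n-1),sn)]).\<close>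
type_synonym ('s, 'a) fpath = "'s \<times> ('a \<times> 's) list"

definition lst :: "('s, 'a) fpath \<Rightarrow> 's" where
  "lst p = (if snd p = [] then fst p else snd (last (snd p)))"

definition ext :: "('s, 'a) fpath \<Rightarrow> 'a \<Rightarrow> 's \<Rightarrow> ('s, 'a) fpath" where
  "ext p \<alpha> s' = (fst p, snd p @ [(\<alpha>, s')])"

fun is_path :: "('s \<Rightarrow> 'a \<Rightarrow> 's \<Rightarrow> real) \<Rightarrow> 's \<Rightarrow> ('a \<times> 's) list \<Rightarrow> bool" where
  "is_path P s [] = True"
| "is_path P s ((\<alpha>, s') # xs) = (P s \<alpha> s' > 0 \<and> is_path P s' xs)"

definition schedulers :: "('s::finite \<Rightarrow> 'a::finite \<Rightarrow> 's \<Rightarrow> real) \<Rightarrow> (('s, 'a) fpath \<Rightarrow> 'a pmf) set" where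
  "schedulers P = {\<sigma>. \<forall>p. is_path P (fst p) (snd p) \<longrightarrow> set_pmf (\<sigma> p) \<subseteq> enabled P (lst p)}"

text \<open>Probability, in the Markov chain induced by \<sigma> started in the history h,
  of reaching T within n further steps.\<close>
primrec reach_le :: "('s::finite \<Rightarrow> 'a::finite \<Rightarrow> 's \<Rightarrow> real) \<Rightarrow> (('s, 'a) fpath \<Rightarrow> 'a pmf)
    \<Rightarrow> 's set \<Rightarrow> ('s, 'a) fpath \<Rightarrow> nat \<Rightarrow> real" where
  "reach_le P \<sigma> T h 0 = (if lst h \<in> T then 1 else 0)"
| "reach_le P \<sigma> T h (Suc n) = (if lst h \<in> T then 1 else
      (\<Sum>\<alpha>\<in>UNIV. pmf (\<sigma> h) \<alpha> * (\<Sum>s'\<in>UNIV. P (lst h) \<alpha> s' * reach_le P \<sigma> T (ext h \<alpha> s') n)))"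

definition PrReach :: "('s::finite \<Rightarrow> 'a::finite \<Rightarrow> 's \<Rightarrow> real) \<Rightarrow> (('s, 'a) fpath \<Rightarrow> 'a pmf)
    \<Rightarrow> 's \<Rightarrow> 's set \<Rightarrow> real" where
  "PrReach P \<sigma> s T = (SUP n. reach_le P \<sigma> T (s, []) n)"

datatype cmp = Gt | Ge | Approx rat | NApprox rat

fun cmp_ok :: "cmp \<Rightarrow> bool" where
  "cmp_ok (Approx \<epsilon>) = (\<epsilon> \<ge> 0)"
| "cmp_ok (NApprox \<epsilon>) = (\<epsilon> \<ge> 0)"
| "cmp_ok _ = True"

fun cmp_eval :: "cmp \<Rightarrow> real \<Rightarrow> real \<Rightarrow> bool" where
  "cmp_eval Gt r r' = (r > r')"
| "cmp_eval Ge r r' = (r \<ge> r')"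
| "cmp_eval (Approx \<epsilon>) r r' = (\<bar>r - r'\<bar> \<le> real_of_rat \<epsilon>)"
| "cmp_eval (NApprox \<epsilon>) r r' = (\<bar>r - r'\<bar> > real_of_rat \<epsilon>)"

end

theory Submission
  imports Defs
begin

text \<open>A reachability probability from s depends only on what the scheduler does on histories
  starting in s. Hence schedulers indexed by pairs (start state, index) can be merged into one
  scheduler per index by dispatching on the first state of the history, falling back to an
  arbitrary scheduler elsewhere; conversely a scheduler per index yields one per pair. Grouping the
  sum by pairs then shows that both sides range over the same values, so neither the comparison
  nor the hypothesis m \<ge> n plays a role.\<close>

lemma reach_le_cong_start:
  assumes "\<And>p. fst p = fst h \<Longrightarrow> \<sigma> p = \<sigma>' p"
  shows "reach_le P \<sigma> T h n = reach_le P \<sigma>' T h n"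
  using assms
proof (induction n arbitrary: h)
  case 0
  then show ?case by simp
next
  case (Suc n)
  have "reach_le P \<sigma> T (ext h \<alpha> s') n = reach_le P \<sigma>' T (ext h \<alpha> s') n" for \<alpha> s'
    by (rule Suc.IH) (simp add: ext_def Suc.prems)
  moreover have "\<sigma> h = \<sigma>' h"
    using Suc.prems by simp
  ultimately show ?case by simp
qed

lemma PrReach_cong_start:
  assumes "\<And>p. fst p = s \<Longrightarrow> \<sigma> p = \<sigma>' p"
  shows "PrReach P \<sigma> s T = PrReach P \<sigma>' s T"
  unfolding PrReach_def using reach_le_cong_start[of "(s, [])" \<sigma> \<sigma>'] assms by simp

lemma schedulers_nonempty:
  assumes "is_mdp P"
  shows "schedulers P \<noteq> {}"
proof -
  have "(SOME \<alpha>. \<alpha> \<in> enabled P s) \<in> enabled P s" for s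
    using assms unfolding is_mdp_def by (metis ex_in_conv someI_ex)
  then have "(\<lambda>p. return_pmf (SOME \<alpha>. \<alpha> \<in> enabled P (lst p))) \<in> schedulers P"
    unfolding schedulers_def by (simp del: split_paired_All)
  then show ?thesis by blast
qed

lemma schedulers_dispatch:
  assumes "\<And>x. \<sigma> x \<in> schedulers P"
  shows "(\<lambda>p. \<sigma> (f p) p) \<in> schedulers P"
  using assms unfolding schedulers_def by (simp del: split_paired_All)

lemma schedulers_merge_by_start:
  fixes \<tau> :: "'s \<times> 'i \<Rightarrow> ('s::finite, 'a::finite) fpath \<Rightarrow> 'a pmf"
  assumes "is_mdp P" and "\<And>c. c \<in> C \<Longrightarrow> \<tau> c \<in> schedulers P"
  obtains \<sigma> where "\<And>i. \<sigma> i \<in> schedulers P"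
    and "\<And>x i T. (x, i) \<in> C \<Longrightarrow> PrReach P (\<sigma> i) x T = PrReach P (\<tau> (x, i)) x T"
proof -
  obtain d where d: "d \<in> schedulers P"
    using schedulers_nonempty[OF assms(1)] by blast
  define \<sigma> where "\<sigma> i p = (if (fst p, i) \<in> C then \<tau> (fst p, i) else d) p" for i p
  have "\<sigma> i \<in> schedulers P" for i
    unfolding \<sigma>_def by (rule schedulers_dispatch) (use assms(2) d in auto)
  moreover have "PrReach P (\<sigma> i) x T = PrReach P (\<tau> (x, i)) x T" if "(x, i) \<in> C" for x i T
    by (rule PrReach_cong_start) (use that in \<open>simp add: \<sigma>_def\<close>)
  ultimately show thesis by (rule that)
qed

lemma sum_group_by_fiber:
  assumes "finite A" and "\<And>j. j \<in> A \<Longrightarrow> g (h j) j = f j"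
  shows "(\<Sum>c\<in>h ` A. \<Sum>j\<in>{i \<in> A. h i = c}. g c j) = (\<Sum>j\<in>A. f j)"
proof -
  have "(\<Sum>c\<in>h ` A. \<Sum>j\<in>{i \<in> A. h i = c}. g c j) = (\<Sum>c\<in>h ` A. \<Sum>j\<in>{i \<in> A. h i = c}. f j)"
    using assms(2) by (intro sum.cong) auto
  also have "\<dots> = (\<Sum>j\<in>A. f j)"
    by (rule sum.group) (use assms(1) in auto)
  finally show ?thesis .
qed

theorem lemma1:
  fixes P :: "'s::finite \<Rightarrow> 'a::finite \<Rightarrow> 's \<Rightarrow> real"
    and m n :: nat and q :: "nat \<Rightarrow> rat" and s :: "nat \<Rightarrow> 's"
    and k :: "nat \<Rightarrow> nat" and T :: "nat \<Rightarrow> 's set" and comp :: cmp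
  assumes "is_mdp P"
    and "m \<ge> n"
    and "k ` {1..m} = {1..n}"
    and "cmp_ok comp"
  shows "(\<exists>\<sigma> :: nat \<Rightarrow> (('s, 'a) fpath \<Rightarrow> 'a pmf).
            (\<forall>i\<in>{1..n}. \<sigma> i \<in> schedulers P) \<and>
            cmp_eval comp (\<Sum>i=1..m. real_of_rat (q i) * PrReach P (\<sigma> (k i)) (s i) (T i))
                          (real_of_rat (q (m + 1))))
     \<longleftrightarrow>
     (\<exists>\<tau> :: 's \<times> nat \<Rightarrow> (('s, 'a) fpath \<Rightarrow> 'a pmf).
            (\<forall>c\<in>{(s i, k i) | i. i \<in> {1..m}}. \<tau> c \<in> schedulers P) \<and>
            cmp_eval comp
              (\<Sum>c\<in>{(s i, k i) | i. i \<in> {1..m}}.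
                  \<Sum>j\<in>{i \<in> {1..m}. (s i, k i) = c}. real_of_rat (q j) * PrReach P (\<tau> c) (s j) (T j))
              (real_of_rat (q (m + 1))))"
proof -
  let ?c = "\<lambda>i. (s i, k i)"
  let ?bound = "real_of_rat (q (m + 1))"
  let ?sum = "\<lambda>\<sigma>. \<Sum>i=1..m. real_of_rat (q i) * PrReach P (\<sigma> i) (s i) (T i)"
  let ?grouped = "\<lambda>\<tau>. \<Sum>c\<in>?c ` {1..m}.
    \<Sum>j\<in>{i \<in> {1..m}. ?c i = c}. real_of_rat (q j) * PrReach P (\<tau> c) (s j) (T j)"
  have regroup: "?grouped \<tau> = ?sum (\<lambda>i. \<tau> (?c i))" for \<tau>
    by (rule sum_group_by_fiber) auto
  have "(\<exists>\<sigma>. (\<forall>i\<in>{1..n}. \<sigma> i \<in> schedulers P) \<and> cmp_eval comp (?sum (\<lambda>i. \<sigma> (k i))) ?bound)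
    \<longleftrightarrow> (\<exists>\<tau>. (\<forall>c\<in>?c ` {1..m}. \<tau> c \<in> schedulers P) \<and> cmp_eval comp (?grouped \<tau>) ?bound)"
    (is "?by_index \<longleftrightarrow> ?by_comb")
  proof
    assume ?by_index
    then obtain \<sigma> where \<sigma>: "\<forall>i\<in>{1..n}. \<sigma> i \<in> schedulers P"
      and cmp: "cmp_eval comp (?sum (\<lambda>i. \<sigma> (k i))) ?bound"
      by blast
    have "\<forall>c\<in>?c ` {1..m}. \<sigma> (snd c) \<in> schedulers P"
      using \<sigma> assms(3) by auto
    with cmp show ?by_comb
      by (intro exI[of _ "\<lambda>c. \<sigma> (snd c)"]) (simp only: regroup snd_conv)
  next
    assume ?by_comb
    then obtain \<tau> where "\<forall>c\<in>?c ` {1..m}. \<tau> c \<in> schedulers P"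
      and cmp: "cmp_eval comp (?grouped \<tau>) ?bound"
      by blast
    then obtain \<sigma> where \<sigma>: "\<And>i. \<sigma> i \<in> schedulers P"
      and \<sigma>_\<tau>: "\<And>x i T. (x, i) \<in> ?c ` {1..m} \<Longrightarrow> PrReach P (\<sigma> i) x T = PrReach P (\<tau> (x, i)) x T"
      using schedulers_merge_by_start[OF assms(1)] by blast
    have "?grouped \<tau> = ?sum (\<lambda>i. \<sigma> (k i))"
      unfolding regroup using \<sigma>_\<tau> by (intro sum.cong) auto
    with cmp \<sigma> show ?by_index
      by (intro exI[of _ \<sigma>]) simp
  qed
  moreover have "{(s i, k i) | i. i \<in> {1..m}} = ?c ` {1..m}"
    by blast
  ultimately show ?thesis
    by (simp only:)
qed

end
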